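(* Let $L\subseteq\Sigma^*$ with $L\notin\{\emptyset,\Sigma^*\}$, and suppose $L$ is prefix-closed, suffix-closed, factor-closed, or subword-closed. Then: - $L^{-*}=L^-\cup\{\epsilon\}$ and $L^{-*-}=L\setminus\{\epsilon\}$; - $(L\setminus\{\epsilon\})^*=L^*$; - $L^*$ is closed under the same relation as $L$. Consequently, every language obtainable from $L$ by finitely many applications of Kleene star and complement is one of the eight languages $L$, $L^-$, $L^-\cup\{\epsilon\}$, $L\setminus\{\epsilon\}$, $L^*$, $L^{*-}$, $L^{*-}\cup\{\epsilon\}$, $L^*\setminus\{\epsilon\}$.
   Context: $L^-=\Sigma^*\setminus L$ denotes complement and $L^*$ Kleene star. Notation such as $L^{-*-}$ means apply complement, then star, then complement, in that order. A language is prefix-closed (suffix-, factor-, subword-closed) if it contains every prefix (suffix, factor, subword) of each of its words, where subword means scattered subsequence. *)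

theory Defs
  imports Main "HOL-Library.Sublist"
begin

text \<open>Languages over the alphabet given by the (nonempty) type 'a; words are lists,
  \<Sigma>* is UNIV, complement is set complement -L.\<close>

inductive_set kstar :: "'a list set \<Rightarrow> 'a list set" for L :: "'a list set" where
  kstar_Nil: "[] \<in> kstar L"
| kstar_app: "u \<in> L \<Longrightarrow> v \<in> kstar L \<Longrightarrow> u @ v \<in> kstar L"

definition closed_under :: "('a list \<Rightarrow> 'a list \<Rightarrow> bool) \<Rightarrow> 'a list set \<Rightarrow> bool" where
  "closed_under R L \<longleftrightarrow> (\<forall>w\<in>L. \<forall>u. R u w \<longrightarrow> u \<in> L)"

inductive_set star_compl_closure :: "'a list set \<Rightarrow> 'a list set set" for L :: "'a list set" where
  sc_base: "L \<in> star_compl_closure L"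
| sc_star: "K \<in> star_compl_closure L \<Longrightarrow> kstar K \<in> star_compl_closure L"
| sc_compl: "K \<in> star_compl_closure L \<Longrightarrow> - K \<in> star_compl_closure L"

end

theory Submission
  imports Defs
begin

(* Every relation R among prefix, suffix, factor (sublist) and subword
   (subseq) makes an R-closed language prefix-closed or suffix-closed; in either case
   its complement is closed under concatenation, so starring the complement only adds
   the empty word: kstar (-L) = -L \<union> {[]}.  Since [] \<in> L (L is nonempty and []
   is R-below every word), complementing gives -kstar (-L) = L - {[]}.
   Star preserves each of the four closure properties, so the same identity holds
   for kstar L in place of L.
   Finally, for a language M containing [] with kstar (-M) = -M \<union> {[]}, the four
   languages M, -M, -M \<union> {[]}, M - {[]} are permuted by complement and sent by star
   into {kstar M, -M \<union> {[]}}.  Applied to M = L and M = kstar L (star is idempotent),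
   the eight resulting languages form a family closed under star and complement,
   which therefore contains the whole star-complement closure of L. *)

lemma kstar_incl: "u \<in> K \<Longrightarrow> u \<in> kstar K"
  by (metis append_Nil2 kstar_Nil kstar_app)

lemma kstar_append: "u \<in> kstar K \<Longrightarrow> v \<in> kstar K \<Longrightarrow> u @ v \<in> kstar K"
  by (induction rule: kstar.induct) (auto intro: kstar_app)

text \<open>kstar B is the least concatenation-closed language containing [] and B,
  so it contains the star of each of its subsets.\<close>
lemma kstar_least: "A \<subseteq> kstar B \<Longrightarrow> kstar A \<subseteq> kstar B"
proof
  fix w assume "A \<subseteq> kstar B" and "w \<in> kstar A"
  from \<open>w \<in> kstar A\<close> show "w \<in> kstar B" using \<open>A \<subseteq> kstar B\<close>
    by (induction rule: kstar.induct) (auto intro: kstar_Nil kstar_append)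
qed

lemma kstar_idem: "kstar (kstar K) = kstar K"
  by (rule antisym, rule kstar_least, simp, rule subsetI, rule kstar_incl)

lemma kstar_minus_Nil: "kstar (K - {[]}) = kstar K"
proof (rule antisym)
  show "kstar (K - {[]}) \<subseteq> kstar K" by (rule kstar_least) (auto intro: kstar_incl)
  show "kstar K \<subseteq> kstar (K - {[]})" by (rule kstar_least) (auto intro: kstar_incl kstar_Nil)
qed

lemma kstar_insert_Nil: "kstar (insert [] K) = kstar K"
proof (rule antisym)
  show "kstar (insert [] K) \<subseteq> kstar K" by (rule kstar_least) (auto intro: kstar_incl kstar_Nil)
  show "kstar K \<subseteq> kstar (insert [] K)" by (rule kstar_least) (auto intro: kstar_incl)
qed

lemma kstar_of_concat_closed:
  assumes "\<And>u v. u \<in> M \<Longrightarrow> v \<in> M \<Longrightarrow> u @ v \<in> M"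
  shows "kstar M = insert [] M"
proof (rule antisym)
  show "kstar M \<subseteq> insert [] M"
  proof
    fix w assume "w \<in> kstar M"
    then show "w \<in> insert [] M"
      by (induction rule: kstar.induct) (auto intro: assms)
  qed
  show "insert [] M \<subseteq> kstar M" by (auto intro: kstar_Nil kstar_incl)
qed

lemma closed_under_subrel:
  assumes "\<And>u w. R' u w \<Longrightarrow> R u w" and "closed_under R K"
  shows "closed_under R' K"
  using assms unfolding closed_under_def by blast

text \<open>A factor is a suffix of a prefix, so factor-closure is the conjunction
  of prefix- and suffix-closure.\<close>
lemma closed_under_sublist_iff:
  "closed_under sublist K \<longleftrightarrow> closed_under prefix K \<and> closed_under suffix K"
  unfolding closed_under_def sublist_altdef by blast

lemma closed_under_prefix_or_suffix:
  assumes "R \<in> {prefix, suffix, sublist, subseq}" and "closed_under R K"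
  shows "closed_under prefix K \<or> closed_under suffix K"
proof -
  have "closed_under sublist K" if "R = subseq"
    using assms that closed_under_subrel[of sublist subseq] sublist_imp_subseq by auto
  then show ?thesis using assms closed_under_sublist_iff by auto
qed

text \<open>The empty word lies below every word in each of the four relations,
  so a nonempty closed language contains it.\<close>
lemma Nil_in_closed:
  assumes "R \<in> {prefix, suffix, sublist, subseq}" and "closed_under R K" and "K \<noteq> {}"
  shows "[] \<in> K"
proof -
  obtain w where "w \<in> K" using assms(3) by blast
  moreover have "R [] w" using assms(1) by auto
  ultimately show ?thesis using assms(2) unfolding closed_under_def by blast
qed

text \<open>The complement of a prefix- or suffix-closed language is closed under
  concatenation, hence its star only adds the empty word.\<close>
lemma kstar_compl_closed:
  assumes "closed_under prefix K \<or> closed_under suffix K"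
  shows "kstar (- K) = - K \<union> {[]}"
proof -
  have "u @ v \<in> - K" if "u \<in> - K" "v \<in> - K" for u v
    using assms that unfolding closed_under_def by (auto simp: suffix_def)
  then show ?thesis using kstar_of_concat_closed[of "- K"] by auto
qed

lemma kstar_closed_prefix:
  assumes "closed_under prefix K"
  shows "closed_under prefix (kstar K)"
  unfolding closed_under_def
proof (intro ballI allI impI)
  fix w u assume "w \<in> kstar K" "prefix u w"
  then show "u \<in> kstar K"
  proof (induction arbitrary: u rule: kstar.induct)
    case kstar_Nil then show ?case by (simp add: kstar.kstar_Nil)
  next
    case (kstar_app x v)
    from kstar_app.prems consider "prefix u x" | us where "u = x @ us" "prefix us v"
      by (auto simp: prefix_append)
    then show ?case
    proof cases
      case 1 then show ?thesis using assms kstar_app.hyps(1)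
        unfolding closed_under_def by (auto intro: kstar_incl)
    next
      case 2 then show ?thesis using kstar_app by (auto intro: kstar.kstar_app)
    qed
  qed
qed

lemma kstar_closed_suffix:
  assumes "closed_under suffix K"
  shows "closed_under suffix (kstar K)"
  unfolding closed_under_def
proof (intro ballI allI impI)
  fix w u assume "w \<in> kstar K" "suffix u w"
  then show "u \<in> kstar K"
  proof (induction arbitrary: u rule: kstar.induct)
    case kstar_Nil then show ?case by (simp add: kstar.kstar_Nil)
  next
    case (kstar_app x v)
    from kstar_app.prems consider "suffix u v" | us where "u = us @ v" "suffix us x"
      by (auto simp: suffix_append)
    then show ?case
    proof cases
      case 1 then show ?thesis using kstar_app by auto
    next
      case 2 then show ?thesis using kstar_app assms
        unfolding closed_under_def by (auto intro: kstar.kstar_app)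
    qed
  qed
qed

lemma kstar_closed_sublist:
  "closed_under sublist K \<Longrightarrow> closed_under sublist (kstar K)"
  using kstar_closed_prefix kstar_closed_suffix closed_under_sublist_iff by blast

lemma kstar_closed_subseq:
  assumes "closed_under subseq K"
  shows "closed_under subseq (kstar K)"
  unfolding closed_under_def
proof (intro ballI allI impI)
  fix w u assume "w \<in> kstar K" "subseq u w"
  then show "u \<in> kstar K"
  proof (induction arbitrary: u rule: kstar.induct)
    case kstar_Nil then show ?case using list_emb_Nil2 kstar.kstar_Nil by metis
  next
    case (kstar_app x v)
    from kstar_app.prems obtain u1 u2 where u: "u = u1 @ u2" "subseq u1 x" "subseq u2 v"
      by (auto elim: subseq_appendE)
    have "u1 \<in> K" using u assms kstar_app.hyps(1) unfolding closed_under_def by auto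
    then show ?case using u kstar_app by (auto intro: kstar.kstar_app)
  qed
qed

lemma kstar_closed:
  assumes "R \<in> {prefix, suffix, sublist, subseq}" and "closed_under R K"
  shows "closed_under R (kstar K)"
  using assms kstar_closed_prefix kstar_closed_suffix kstar_closed_sublist
    kstar_closed_subseq by blast

lemma star_compl_closure_least:
  assumes "L \<in> F" and "\<And>K. K \<in> F \<Longrightarrow> kstar K \<in> F" and "\<And>K. K \<in> F \<Longrightarrow> - K \<in> F"
  shows "star_compl_closure L \<subseteq> F"
proof
  fix K assume "K \<in> star_compl_closure L"
  then show "K \<in> F" by (induction rule: star_compl_closure.induct) (auto intro: assms)
qed

definition compl_orbit :: "'a list set \<Rightarrow> 'a list set set" where
  "compl_orbit M = {M, - M, - M \<union> {[]}, M - {[]}}"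

lemma compl_orbit_compl:
  assumes "[] \<in> M" and "K \<in> compl_orbit M"
  shows "- K \<in> compl_orbit M"
proof -
  have "- (- M \<union> {[]}) = M - {[]}" "- (M - {[]}) = - M \<union> {[]}"
    using assms(1) by blast+
  with assms(2) show ?thesis
    unfolding compl_orbit_def by (elim insertE emptyE) simp_all
qed

lemma compl_orbit_kstar:
  assumes "kstar (- M) = - M \<union> {[]}" and "K \<in> compl_orbit M"
  shows "kstar K \<in> {kstar M, - M \<union> {[]}}"
proof -
  have "kstar (- M \<union> {[]}) = - M \<union> {[]}"
    using assms(1) kstar_insert_Nil[of "- M"] by simp
  with assms(2) show ?thesis
    unfolding compl_orbit_def
    by (elim insertE emptyE) (simp_all only: assms(1) kstar_minus_Nil insert_iff simp_thms)
qed

theorem mainTheorem11: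
  fixes L :: "'a list set" and R :: "'a list \<Rightarrow> 'a list \<Rightarrow> bool"
  assumes "L \<noteq> {}" and "L \<noteq> UNIV"
    and "R \<in> {prefix, suffix, sublist, subseq}"
    and "closed_under R L"
  shows "kstar (- L) = - L \<union> {[]} \<and>
         - kstar (- L) = L - {[]} \<and>
         kstar (L - {[]}) = kstar L \<and>
         closed_under R (kstar L) \<and>
         star_compl_closure L \<subseteq>
           {L, - L, - L \<union> {[]}, L - {[]}, kstar L, - kstar L,
            - kstar L \<union> {[]}, kstar L - {[]}}"
proof -
  have star_L: "kstar (- L) = - L \<union> {[]}"
    using kstar_compl_closed closed_under_prefix_or_suffix assms(3,4) by blast
  have Nil_L: "[] \<in> L" using Nil_in_closed assms(3,4,1) .
  have closed_star: "closed_under R (kstar L)" using kstar_closed assms(3,4) .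
  have star_star_L: "kstar (- kstar L) = - kstar L \<union> {[]}"
    using kstar_compl_closed closed_under_prefix_or_suffix assms(3) closed_star by blast
  define F where "F = compl_orbit L \<union> compl_orbit (kstar L)"
  have "star_compl_closure L \<subseteq> F"
  proof (rule star_compl_closure_least)
    show "L \<in> F" unfolding F_def compl_orbit_def by simp
  next
    fix K assume "K \<in> F"
    then consider "K \<in> compl_orbit L" | "K \<in> compl_orbit (kstar L)"
      unfolding F_def by blast
    then have "kstar K \<in> {kstar L, - L \<union> {[]}, - kstar L \<union> {[]}}"
    proof cases
      case 1 then show ?thesis using compl_orbit_kstar[OF star_L] by blast
    next
      case 2 then show ?thesis using compl_orbit_kstar[OF star_star_L] unfolding kstar_idem by blast
    qed
    then show "kstar K \<in> F"
      unfolding F_def compl_orbit_def by (simp only: insert_iff Un_iff empty_iff) blast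
    show "- K \<in> F"
      using \<open>K \<in> F\<close> compl_orbit_compl[OF Nil_L] compl_orbit_compl[OF kstar_Nil]
      unfolding F_def Un_iff by blast
  qed
  also have "F = {L, - L, - L \<union> {[]}, L - {[]}, kstar L, - kstar L,
                  - kstar L \<union> {[]}, kstar L - {[]}}"
    unfolding F_def compl_orbit_def by (simp only: Un_insert_left Un_empty_left)
  finally have closure: "star_compl_closure L \<subseteq> {L, - L, - L \<union> {[]}, L - {[]}, kstar L,
                                   - kstar L, - kstar L \<union> {[]}, kstar L - {[]}}" .
  have "- kstar (- L) = L - {[]}" unfolding star_L using Nil_L by blast
  with star_L kstar_minus_Nil closed_star closure show ?thesis by (intro conjI)
qed

end
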